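(* Let $H$ be a self-adjoint operator on a $2^L$-dimensional Hilbert space whose eigenvalues, counted with multiplicity, are $E_{\boldsymbol n}=E_0+\sum_{k=1}^Ln_k\Lambda_k$, $\boldsymbol n\in\{0,1\}^L$, with real $E_0,\Lambda_1,\dots,\Lambda_L$. Let $\epsilon_1,\dots,\epsilon_{L_B}$ be the distinct values among the $\Lambda_k$, $\epsilon_j$ occurring $g_j$ times, and assume $\epsilon_1,\dots,\epsilon_{L_B}$ are linearly independent over $\mathbb Q$. Let $\chi(t)=\operatorname{tr}(e^{-itH})$. Then for every $M\in\mathbb N$, $$\overline{|\chi(t)|^{2M}}=\prod_{j=1}^{L_B}\binom{2g_jM}{g_jM}.$$
   Context: $\overline{f(t)}:=\lim_{T\to\infty}\frac1T\int_0^Tf(t)\,dt$. *)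

theory Defs
  imports "HOL-Analysis.Analysis"
begin

definition occ :: "nat \<Rightarrow> (nat \<Rightarrow> nat) set" where
  "occ L = ({1..L} \<rightarrow>\<^sub>E {0, 1})"

definition energy :: "nat \<Rightarrow> real \<Rightarrow> (nat \<Rightarrow> real) \<Rightarrow> (nat \<Rightarrow> nat) \<Rightarrow> real" where
  "energy L E0 \<Lambda> n = E0 + (\<Sum>k=1..L. real (n k) * \<Lambda> k)"

text \<open>chi(t) = tr(exp(-itH)) = sum over the spectrum (with multiplicity) of exp(-i t E_n).\<close>
definition chi :: "nat \<Rightarrow> real \<Rightarrow> (nat \<Rightarrow> real) \<Rightarrow> real \<Rightarrow> complex" where
  "chi L E0 \<Lambda> t = (\<Sum>n\<in>occ L. exp (- \<i> * of_real t * of_real (energy L E0 \<Lambda> n)))"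

definition rat_lin_indep :: "real set \<Rightarrow> bool" where
  "rat_lin_indep V \<longleftrightarrow>
     (\<forall>q :: real \<Rightarrow> rat. (\<Sum>x\<in>V. of_rat (q x) * x) = 0 \<longrightarrow> (\<forall>x\<in>V. q x = 0))"

definition mult_of :: "nat \<Rightarrow> (nat \<Rightarrow> real) \<Rightarrow> real \<Rightarrow> nat" where
  "mult_of L \<Lambda> e = card {k \<in> {1..L}. \<Lambda> k = e}"

end

theory Submission
  imports Defs
begin

(* Since |1 + e^(-ix)|^2 = 2 + 2 cos x, the factorisation chi(t) = e^(-itE_0) prod_k (1 + e^(-it Lambda_k))
   gives |chi(t)|^(2M) = prod_e (2 + 2 cos (te))^(g_e M), the product running over the distinct values e
   of the Lambda_k.  Writing 2 + 2 cos x = (e^(ix/2) + e^(-ix/2))^2 and expanding binomially turns this into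
   a finite sum of terms c_p e^(it omega_p) with omega_p = sum_e (p_e - g_e M) e.  The time average of
   e^(it omega) is 1 for omega = 0 and 0 otherwise, and by rational independence omega_p = 0 only for
   p_e = g_e M, whose coefficient is prod_e binom(2 g_e M, g_e M). *)

lemma chi_eq_prod:
  "chi L E0 \<Lambda> t = exp (- \<i> * of_real t * of_real E0) * (\<Prod>k\<in>{1..L}. 1 + exp (- \<i> * of_real (t * \<Lambda> k)))"
proof -
  have "(\<Prod>k\<in>{1..L}. 1 + exp (- \<i> * of_real (t * \<Lambda> k)))
      = (\<Prod>k\<in>{1..L}. \<Sum>b\<in>{0::nat, 1}. exp (- \<i> * of_real (t * real b * \<Lambda> k)))"
    by (intro prod.cong refl) auto
  also have "\<dots> = (\<Sum>n\<in>occ L. \<Prod>k\<in>{1..L}. exp (- \<i> * of_real (t * real (n k) * \<Lambda> k)))"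
    unfolding occ_def by (rule prod_sum_PiE) auto
  finally have "exp (- \<i> * of_real t * of_real E0) * (\<Prod>k\<in>{1..L}. 1 + exp (- \<i> * of_real (t * \<Lambda> k)))
      = (\<Sum>n\<in>occ L. exp (- \<i> * of_real t * of_real E0) * (\<Prod>k\<in>{1..L}. exp (- \<i> * of_real (t * real (n k) * \<Lambda> k))))"
    by (simp add: sum_distrib_left)
  also have "\<dots> = chi L E0 \<Lambda> t"
    unfolding chi_def
  proof (rule sum.cong[OF refl])
    fix n
    have "- \<i> * of_real t * of_real (energy L E0 \<Lambda> n)
        = - \<i> * of_real t * of_real E0 + (\<Sum>k=1..L. - \<i> * of_real (t * real (n k) * \<Lambda> k))"
      by (simp add: energy_def sum_distrib_left algebra_simps)
    then show "exp (- \<i> * of_real t * of_real E0) * (\<Prod>k\<in>{1..L}. exp (- \<i> * of_real (t * real (n k) * \<Lambda> k)))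
        = exp (- \<i> * of_real t * of_real (energy L E0 \<Lambda> n))"
      by (simp only: exp_add exp_sum[OF finite_atLeastAtMost])
  qed
  finally show ?thesis ..
qed

lemma cmod_one_plus_exp_squared: "cmod (1 + exp (- \<i> * of_real x))^2 = 2 + 2 * cos x"
proof -
  have "exp (- \<i> * of_real x) = cis (- x)"
    by (simp add: cis_conv_exp)
  then show ?thesis
    unfolding cmod_power2 using sin_cos_squared_add[of x] by (simp add: power2_eq_square algebra_simps)
qed

lemma cmod_chi_squared: "cmod (chi L E0 \<Lambda> t)^2 = (\<Prod>k\<in>{1..L}. 2 + 2 * cos (t * \<Lambda> k))"
  by (simp add: chi_eq_prod norm_mult norm_exp_i_times prod_power_distrib
      flip: prod_norm cmod_one_plus_exp_squared)

lemma prod_comp_eq_prod_image_power: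
  fixes h :: "'b \<Rightarrow> 'c::comm_monoid_mult"
  assumes "finite A"
  shows "(\<Prod>k\<in>A. h (f k)) = (\<Prod>y\<in>f ` A. h y ^ card {k\<in>A. f k = y})"
proof -
  have "(\<Prod>k\<in>A. h (f k)) = (\<Prod>y\<in>f ` A. \<Prod>k\<in>{k\<in>A. f k = y}. h (f k))"
    using assms by (rule prod.image_gen)
  also have "\<dots> = (\<Prod>y\<in>f ` A. h y ^ card {k\<in>A. f k = y})"
    by (intro prod.cong refl) simp
  finally show ?thesis .
qed

lemma cmod_chi_power_eq_prod_image:
  "cmod (chi L E0 \<Lambda> t) ^ (2 * M) = (\<Prod>e\<in>\<Lambda> ` {1..L}. (2 + 2 * cos (t * e)) ^ (mult_of L \<Lambda> e * M))"
proof -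
  have "cmod (chi L E0 \<Lambda> t) ^ (2 * M) = (\<Prod>k\<in>{1..L}. (2 + 2 * cos (t * \<Lambda> k)) ^ M)"
    by (simp add: power_mult cmod_chi_squared prod_power_distrib)
  also have "\<dots> = (\<Prod>e\<in>\<Lambda> ` {1..L}. ((2 + 2 * cos (t * e)) ^ M) ^ mult_of L \<Lambda> e)"
    unfolding mult_of_def by (rule prod_comp_eq_prod_image_power) simp
  finally show ?thesis
    by (simp only: power_mult[symmetric] mult.commute)
qed

lemma two_plus_two_cos_power:
  "complex_of_real ((2 + 2 * cos x) ^ n)
    = (\<Sum>j\<le>2 * n. of_nat (2 * n choose j) * exp (\<i> * of_real (real j - real n) * of_real x))"
proof -
  define a where "a = exp (\<i> * of_real (x / 2))"
  define b where "b = exp (- \<i> * of_real (x / 2))"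
  have "complex_of_real (2 + 2 * cos x) = (a + b)^2"
  proof -
    have "(a + b)^2 = a * a + b * b + 2 * (a * b)"
      by (simp add: power2_eq_square algebra_simps)
    also have "a * b = 1"
      unfolding a_def b_def by (simp add: exp_minus)
    also have "a * a = exp (\<i> * of_real x)"
      unfolding a_def by (simp flip: exp_add)
    also have "b * b = exp (- (\<i> * of_real x))"
      unfolding b_def by (simp flip: exp_add)
    finally show ?thesis
      by (simp add: cos_exp_eq[of "of_real x", simplified cos_of_real] field_simps)
  qed
  then have "complex_of_real ((2 + 2 * cos x) ^ n) = (a + b) ^ (2 * n)"
    by (simp add: power_mult)
  also have "\<dots> = (\<Sum>j\<le>2 * n. of_nat (2 * n choose j) * a ^ j * b ^ (2 * n - j))"
    by (rule binomial_ring)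
  also have "\<dots> = (\<Sum>j\<le>2 * n. of_nat (2 * n choose j) * exp (\<i> * of_real (real j - real n) * of_real x))"
  proof (intro sum.cong refl)
    fix j assume "j \<in> {..2 * n}"
    then have "a ^ j * b ^ (2 * n - j)
        = exp (of_nat j * (\<i> * of_real (x / 2)) + of_nat (2 * n - j) * (- \<i> * of_real (x / 2)))"
      unfolding a_def b_def exp_add exp_of_nat_mult by simp
    also have "\<dots> = exp (\<i> * of_real (real j - real n) * of_real x)"
      using \<open>j \<in> {..2 * n}\<close> by (intro arg_cong[where f = exp]) (simp add: of_nat_diff field_simps)
    finally show "of_nat (2 * n choose j) * a ^ j * b ^ (2 * n - j)
        = of_nat (2 * n choose j) * exp (\<i> * of_real (real j - real n) * of_real x)"
      by (simp add: mult.assoc)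
  qed
  finally show ?thesis .
qed

(* p e is the binomial index chosen in the factor of value e, N e the central index of that factor. *)
definition frequency :: "real set \<Rightarrow> (real \<Rightarrow> nat) \<Rightarrow> (real \<Rightarrow> nat) \<Rightarrow> real" where
  "frequency V N p = (\<Sum>e\<in>V. (real (p e) - real (N e)) * e)"

lemma cmod_chi_power_expansion:
  fixes L M :: nat and E0 t :: real and \<Lambda> :: "nat \<Rightarrow> real"
  defines "V \<equiv> \<Lambda> ` {1..L}" and "N \<equiv> \<lambda>e. mult_of L \<Lambda> e * M"
  shows "complex_of_real (cmod (chi L E0 \<Lambda> t) ^ (2 * M))
    = (\<Sum>p\<in>PiE V (\<lambda>e. {..2 * N e}).
         of_real (\<Prod>e\<in>V. real (2 * N e choose p e)) * exp (\<i> * of_real (frequency V N p) * of_real t))"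
proof -
  have "finite V"
    by (simp add: V_def)
  have "complex_of_real (cmod (chi L E0 \<Lambda> t) ^ (2 * M)) = (\<Prod>e\<in>V. complex_of_real ((2 + 2 * cos (t * e)) ^ N e))"
    by (simp only: cmod_chi_power_eq_prod_image of_real_prod V_def N_def)
  also have "\<dots> = (\<Prod>e\<in>V. \<Sum>j\<le>2 * N e.
      of_nat (2 * N e choose j) * exp (\<i> * of_real (real j - real (N e)) * of_real (t * e)))"
    by (simp only: two_plus_two_cos_power)
  also have "\<dots> = (\<Sum>p\<in>PiE V (\<lambda>e. {..2 * N e}). \<Prod>e\<in>V.
      of_nat (2 * N e choose p e) * exp (\<i> * of_real (real (p e) - real (N e)) * of_real (t * e)))"
    by (rule prod_sum_PiE[OF \<open>finite V\<close>]) simp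
  also have "\<dots> = (\<Sum>p\<in>PiE V (\<lambda>e. {..2 * N e}).
      of_real (\<Prod>e\<in>V. real (2 * N e choose p e)) * exp (\<i> * of_real (frequency V N p) * of_real t))"
  proof (rule sum.cong[OF refl])
    fix p
    have "(\<Sum>e\<in>V. \<i> * of_real (real (p e) - real (N e)) * of_real (t * e))
        = \<i> * of_real (frequency V N p) * of_real t"
      unfolding frequency_def of_real_sum sum_distrib_left sum_distrib_right
      by (intro sum.cong refl) (simp add: algebra_simps)
    then show "(\<Prod>e\<in>V. of_nat (2 * N e choose p e) * exp (\<i> * of_real (real (p e) - real (N e)) * of_real (t * e)))
        = of_real (\<Prod>e\<in>V. real (2 * N e choose p e)) * exp (\<i> * of_real (frequency V N p) * of_real t)"
      by (simp add: prod.distrib flip: exp_sum[OF \<open>finite V\<close>])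
  qed
  finally show ?thesis .
qed

lemma frequency_eq_0_iff:
  assumes "rat_lin_indep V" and "p \<in> extensional V"
  shows "frequency V N p = 0 \<longleftrightarrow> p = restrict N V"
proof
  assume "frequency V N p = 0"
  then have "(\<Sum>e\<in>V. of_rat (of_nat (p e) - of_nat (N e)) * e) = 0"
    by (simp add: frequency_def of_rat_diff)
  then have "\<forall>e\<in>V. p e = N e"
    using assms(1) unfolding rat_lin_indep_def by fastforce
  with assms(2) show "p = restrict N V"
    by (auto simp: extensional_def)
qed (simp add: frequency_def)

lemma time_average_exp:
  "((\<lambda>T. (1/T) * integral {0..T} (\<lambda>t. exp (\<i> * of_real \<omega> * of_real t)))
     \<longlongrightarrow> (if \<omega> = 0 then 1 else 0)) at_top"
proof (cases "\<omega> = 0")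
  case True
  have "\<forall>\<^sub>F T in at_top. (1/T) * integral {0..T} (\<lambda>t. exp (\<i> * of_real \<omega> * of_real t)) = 1"
    using eventually_gt_at_top[of 0] by eventually_elim (simp add: True scaleR_conv_of_real)
  then show ?thesis
    using True by (simp add: tendsto_eventually)
next
  case False
  have "((\<lambda>T. cos (\<omega> * T) / T - 1 / T) \<longlongrightarrow> 0) at_top" "((\<lambda>T. sin (\<omega> * T) / T) \<longlongrightarrow> 0) at_top"
    by real_asymp+
  then have "((\<lambda>T. (exp (\<i> * of_real \<omega> * of_real T) - 1) / of_real T) \<longlongrightarrow> 0) at_top"
    by (simp add: tendsto_complex_iff Re_exp Im_exp diff_divide_distrib)
  then have "((\<lambda>T. (exp (\<i> * of_real \<omega> * of_real T) - 1) / of_real T / (\<i> * of_real \<omega>)) \<longlongrightarrow> 0) at_top"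
    using tendsto_divide_zero by blast
  moreover have "\<forall>\<^sub>F T in at_top. (exp (\<i> * of_real \<omega> * of_real T) - 1) / of_real T / (\<i> * of_real \<omega>)
      = (1/T) * integral {0..T} (\<lambda>t. exp (\<i> * of_real \<omega> * of_real t))"
    using eventually_ge_at_top[of 0] by eventually_elim (simp add: integral_exp False)
  ultimately show ?thesis
    using False by (simp add: tendsto_cong)
qed

lemma time_average_trig_poly:
  fixes c :: "'a \<Rightarrow> complex" and \<omega> :: "'a \<Rightarrow> real"
  assumes "finite P"
  shows "((\<lambda>T. (1/T) * integral {0..T} (\<lambda>t. \<Sum>p\<in>P. c p * exp (\<i> * of_real (\<omega> p) * of_real t)))
          \<longlongrightarrow> (\<Sum>p\<in>{p\<in>P. \<omega> p = 0}. c p)) at_top"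
proof -
  have "integral {0..T} (\<lambda>t. \<Sum>p\<in>P. c p * exp (\<i> * of_real (\<omega> p) * of_real t))
      = (\<Sum>p\<in>P. c p * integral {0..T} (\<lambda>t. exp (\<i> * of_real (\<omega> p) * of_real t)))" for T
    by (simp add: assms integral_sum integrable_continuous_interval continuous_intros)
  moreover have "((\<lambda>T. \<Sum>p\<in>P. c p * ((1/T) * integral {0..T} (\<lambda>t. exp (\<i> * of_real (\<omega> p) * of_real t))))
      \<longlongrightarrow> (\<Sum>p\<in>P. c p * (if \<omega> p = 0 then 1 else 0))) at_top"
    by (intro tendsto_sum tendsto_mult tendsto_const time_average_exp)
  moreover have "(\<Sum>p\<in>P. c p * (if \<omega> p = 0 then 1 else 0)) = (\<Sum>p\<in>{p\<in>P. \<omega> p = 0}. c p)"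
    using assms by (simp add: sum.inter_filter if_distrib cong: if_cong)
  ultimately show ?thesis
    by (simp add: sum_distrib_left mult.left_commute)
qed

lemma time_average_real_trig_poly:
  fixes f :: "real \<Rightarrow> real" and c :: "'a \<Rightarrow> complex" and \<omega> :: "'a \<Rightarrow> real"
  assumes "finite P" and f: "\<And>t. complex_of_real (f t) = (\<Sum>p\<in>P. c p * exp (\<i> * of_real (\<omega> p) * of_real t))"
  shows "((\<lambda>T. (1/T) * integral {0..T} f) \<longlongrightarrow> Re (\<Sum>p\<in>{p\<in>P. \<omega> p = 0}. c p)) at_top"
proof -
  have "integral {0..T} f = Re (integral {0..T} (\<lambda>t. complex_of_real (f t)))" for T
  proof -
    have "(\<lambda>t. complex_of_real (f t)) integrable_on {0..T}"
      unfolding f by (intro integrable_continuous_interval continuous_intros)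
    from has_integral_Re[OF integrable_integral[OF this]] show ?thesis
      by (simp add: integral_unique)
  qed
  then show ?thesis
    using tendsto_Re[OF time_average_trig_poly[OF assms(1), of c \<omega>]] by (simp add: f[symmetric])
qed

theorem theorem6:
  fixes L M :: nat and E0 :: real and \<Lambda> :: "nat \<Rightarrow> real"
  assumes "rat_lin_indep (\<Lambda> ` {1..L})"
  shows "((\<lambda>T. (1 / T) * integral {0..T} (\<lambda>t. cmod (chi L E0 \<Lambda> t) ^ (2 * M)))
          \<longlongrightarrow> (\<Prod>e\<in>\<Lambda> ` {1..L}. real ((2 * mult_of L \<Lambda> e * M) choose (mult_of L \<Lambda> e * M))))
         at_top"
proof -
  define V where "V = \<Lambda> ` {1..L}"
  define N where "N = (\<lambda>e. mult_of L \<Lambda> e * M)"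
  define P where "P = PiE V (\<lambda>e. {..2 * N e})"
  have "finite P"
    by (simp add: P_def V_def finite_PiE)
  have expansion: "complex_of_real (cmod (chi L E0 \<Lambda> t) ^ (2 * M)) = (\<Sum>p\<in>P.
      of_real (\<Prod>e\<in>V. real (2 * N e choose p e)) * exp (\<i> * of_real (frequency V N p) * of_real t))" for t
    unfolding V_def N_def P_def by (rule cmod_chi_power_expansion)
  have "{p\<in>P. frequency V N p = 0} = {restrict N V}"
    using frequency_eq_0_iff[OF assms[folded V_def]] by (auto simp: P_def PiE_def)
  then have limit: "Re (\<Sum>p\<in>{p\<in>P. frequency V N p = 0}. complex_of_real (\<Prod>e\<in>V. real (2 * N e choose p e)))
      = (\<Prod>e\<in>V. real (2 * N e choose N e))"
    by (simp del: of_real_prod cong: prod.cong)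
  show ?thesis
    using time_average_real_trig_poly[OF \<open>finite P\<close> expansion] unfolding limit
    by (simp add: V_def N_def mult.assoc)
qed

end
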